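(* Let $\Delta$ be a $d$-dimensional simplicial complex on vertex set $[n]$ with $d>0$ and $f_{d-1}\ge f_d$, let $R=\mathbb{K}[x_1,\dots,x_n]$, $J=I_\Delta+(x_1^{d+2},\dots,x_n^{d+2})$ and $t=\binom{d+2}{2}$. Then $\dim_{\mathbb{K}}(R/J)_{t-1}\ge\dim_{\mathbb{K}}(R/J)_t$. In particular, this inequality holds when $\Delta$ is a $d$-dimensional orientable pseudomanifold without boundary with $d>0$.
   Context: $f_i$ is the number of $i$-dimensional faces of $\Delta$ and $I_\Delta$ is its Stanley–Reisner ideal. A $d$-dimensional pseudomanifold is a pure $d$-dimensional complex that is strongly connected (any two facets are joined by a sequence of facets with consecutive ones sharing a $(d-1)$-face) and in which every $(d-1)$-face lies in at most two facets; it is without boundary if every $(d-1)$-face lies in exactly two facets, and orientable over $\mathbb{K}$ if moreover $\tilde H_d(\Delta;\mathbb{K})\ne0$. *)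

theory Defs
  imports Main "HOL-Library.Poly_Mapping"
begin

text \<open>The ring R = K[x_1..x_n] consists of the polynomials all of whose monomials only
  involve the variables 1..n.\<close>

type_synonym 'k mpoly = "(nat \<Rightarrow>\<^sub>0 nat) \<Rightarrow>\<^sub>0 'k"

definition var :: "nat \<Rightarrow> 'k::field mpoly" where
  "var i = Poly_Mapping.single (Poly_Mapping.single i 1) 1"

definition const :: "'k::field \<Rightarrow> 'k mpoly" where
  "const c = Poly_Mapping.single 0 c"

definition mono_deg :: "(nat \<Rightarrow>\<^sub>0 nat) \<Rightarrow> nat" where
  "mono_deg m = (\<Sum>i\<in>Poly_Mapping.keys m. Poly_Mapping.lookup m i)"

definition in_R :: "nat \<Rightarrow> 'k::field mpoly \<Rightarrow> bool" where
  "in_R n p \<longleftrightarrow> (\<forall>m\<in>Poly_Mapping.keys p. Poly_Mapping.keys m \<subseteq> {1..n})"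

definition homog_piece :: "nat \<Rightarrow> nat \<Rightarrow> 'k::field mpoly set" where
  "homog_piece n k = {p. in_R n p \<and> (\<forall>m\<in>Poly_Mapping.keys p. mono_deg m = k)}"

definition ideal_gen :: "nat \<Rightarrow> 'k::field mpoly set \<Rightarrow> 'k mpoly set" where
  "ideal_gen n G = {p. \<exists>S q. finite S \<and> S \<subseteq> G \<and> (\<forall>g\<in>S. in_R n (q g))
                          \<and> p = (\<Sum>g\<in>S. q g * g)}"

definition lin_indep_mod :: "'k::field mpoly set \<Rightarrow> 'k mpoly set \<Rightarrow> bool" where
  "lin_indep_mod W S \<longleftrightarrow>
     (\<forall>c. (\<Sum>s\<in>S. const (c s) * s) \<in> W \<longrightarrow> (\<forall>s\<in>S. c s = 0))"

text \<open>dim_K (R/J)_k: the dimension of the image of R_k in R/J, i.e. the maximal size of a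
  subset of R_k that is linearly independent in the quotient R/J.\<close>
definition quot_dim :: "nat \<Rightarrow> 'k::field mpoly set \<Rightarrow> nat \<Rightarrow> nat" where
  "quot_dim n J k =
     Max {card S | S. finite S \<and> S \<subseteq> homog_piece n k \<and> lin_indep_mod J S}"

definition simplicial_complex :: "nat \<Rightarrow> nat set set \<Rightarrow> bool" where
  "simplicial_complex n \<Delta> \<longleftrightarrow>
     {} \<in> \<Delta> \<and> (\<forall>F\<in>\<Delta>. F \<subseteq> {1..n}) \<and> (\<forall>F\<in>\<Delta>. \<forall>G. G \<subseteq> F \<longrightarrow> G \<in> \<Delta>)
     \<and> (\<forall>i\<in>{1..n}. {i} \<in> \<Delta>)"

definition cdim :: "nat set set \<Rightarrow> nat \<Rightarrow> bool" where
  "cdim \<Delta> d \<longleftrightarrow> (\<exists>F\<in>\<Delta>. card F = d + 1) \<and> (\<forall>F\<in>\<Delta>. card F \<le> d + 1)"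

definition fvec :: "nat set set \<Rightarrow> nat \<Rightarrow> nat" where
  "fvec \<Delta> i = card {F\<in>\<Delta>. card F = i + 1}"

definition SR_ideal :: "nat \<Rightarrow> nat set set \<Rightarrow> 'k::field mpoly set" where
  "SR_ideal n \<Delta> = ideal_gen n {(\<Prod>i\<in>F. var i) | F. F \<subseteq> {1..n} \<and> F \<notin> \<Delta>}"

definition J_ideal :: "nat \<Rightarrow> nat set set \<Rightarrow> nat \<Rightarrow> 'k::field mpoly set" where
  "J_ideal n \<Delta> d = ideal_gen n
     ({(\<Prod>i\<in>F. var i) | F. F \<subseteq> {1..n} \<and> F \<notin> \<Delta>} \<union> {var i ^ (d + 2) | i. i \<in> {1..n}})"

definition pure :: "nat set set \<Rightarrow> nat \<Rightarrow> bool" where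
  "pure \<Delta> d \<longleftrightarrow> (\<forall>F\<in>\<Delta>. \<exists>G\<in>\<Delta>. F \<subseteq> G \<and> card G = d + 1)"

definition strongly_connected :: "nat set set \<Rightarrow> nat \<Rightarrow> bool" where
  "strongly_connected \<Delta> d \<longleftrightarrow>
     (\<forall>F\<in>\<Delta>. \<forall>G\<in>\<Delta>. card F = d + 1 \<longrightarrow> card G = d + 1 \<longrightarrow>
        (F, G) \<in> {(A, B). A \<in> \<Delta> \<and> B \<in> \<Delta> \<and> card A = d + 1 \<and> card B = d + 1
                        \<and> card (A \<inter> B) = d}\<^sup>*)"

definition pseudomanifold :: "nat set set \<Rightarrow> nat \<Rightarrow> bool" where
  "pseudomanifold \<Delta> d \<longleftrightarrow> cdim \<Delta> d \<and> pure \<Delta> d \<and> strongly_connected \<Delta> d \<and>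
     (\<forall>G\<in>\<Delta>. card G = d \<longrightarrow> card {F\<in>\<Delta>. card F = d + 1 \<and> G \<subseteq> F} \<le> 2)"

definition without_boundary :: "nat set set \<Rightarrow> nat \<Rightarrow> bool" where
  "without_boundary \<Delta> d \<longleftrightarrow>
     (\<forall>G\<in>\<Delta>. card G = d \<longrightarrow> card {F\<in>\<Delta>. card F = d + 1 \<and> G \<subseteq> F} = 2)"

text \<open>Simplicial boundary coefficient: the face F (vertices in increasing order) minus its
  vertex v gets sign (-1)^(position of v in F).\<close>
definition bsign :: "nat set \<Rightarrow> nat set \<Rightarrow> 'k::field" where
  "bsign F G = (-1) ^ card {u\<in>F. u < the_elem (F - G)}"

text \<open>For a d-dimensional complex there are no (d+1)-faces, so the top reduced simplicial
  homology H~_d(Delta;K) equals the space of d-cycles ker(boundary_d); it is nonzero iff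
  there is a nonzero d-chain with zero boundary.\<close>
definition top_homology_nonzero :: "'k::field itself \<Rightarrow> nat set set \<Rightarrow> nat \<Rightarrow> bool" where
  "top_homology_nonzero _ \<Delta> d \<longleftrightarrow>
     (\<exists>c :: nat set \<Rightarrow> 'k.
        (\<exists>F\<in>\<Delta>. card F = d + 1 \<and> c F \<noteq> 0) \<and>
        (\<forall>G\<in>\<Delta>. card G = d \<longrightarrow>
           (\<Sum>F\<in>{F\<in>\<Delta>. card F = d + 1 \<and> G \<subseteq> F}. bsign F G * c F) = 0))"

end

theory Submission
  imports Defs "HOL.Vector_Spaces"
begin

(* J is a monomial ideal, so (R/J)_k has as a basis the monomials of degree k whose support
   is a face of Delta and whose exponents are at most d + 1. Grouping them by support gives
   dim (R/J)_k = sum over faces F of c_|F|(k), where c_j(k) counts the compositions of k into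
   j parts from {1..d+1}; c_j is symmetric about j(d+2)/2 and unimodal. As 2t = (d+1)(d+2),
   a face with at most d vertices contributes at least as much in degree t - 1 as in degree t,
   while the recursion and the symmetry give c_(d+1)(t) - c_(d+1)(t-1) = c_d(t-1) - c_d(t):
   each facet loses exactly what each (d-1)-face gains, so f_(d-1) >= f_d suffices.
   For a pseudomanifold without boundary, double counting the incidences between
   (d-1)-faces and facets gives 2 f_(d-1) = (d+1) f_d. *)

(* number of ways of writing k as an ordered sum of j integers from {1..D+1}, i.e. the
   coefficient of x^k in (x + ... + x^(D+1))^j *)
fun num_compositions :: "nat \<Rightarrow> nat \<Rightarrow> int \<Rightarrow> nat" where
  "num_compositions D 0 k = (if k = 0 then 1 else 0)"
| "num_compositions D (Suc j) k = (\<Sum>i<Suc D. num_compositions D j (k - 1 - int i))"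

lemma num_compositions_symmetric:
  "num_compositions D j (int j * (int D + 2) - k) = num_compositions D j k"
proof (induction j arbitrary: k)
  case 0
  then show ?case by simp
next
  case (Suc j)
  have "num_compositions D (Suc j) (int (Suc j) * (int D + 2) - k)
      = (\<Sum>i<Suc D. num_compositions D j (int j * (int D + 2) - (k - 1 - int (D - i))))"
    unfolding num_compositions.simps(2)
  proof (rule sum.cong[OF refl])
    fix i assume "i \<in> {..<Suc D}"
    then have "int (D - i) = int D - int i" by simp
    then show "num_compositions D j (int (Suc j) * (int D + 2) - k - 1 - int i)
        = num_compositions D j (int j * (int D + 2) - (k - 1 - int (D - i)))"
      by (simp add: algebra_simps)
  qed
  also have "\<dots> = (\<Sum>i<Suc D. num_compositions D j (k - 1 - int (D - i)))"
    by (simp only: Suc.IH)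
  also have "\<dots> = num_compositions D (Suc j) k"
    using sum.nat_diff_reindex[of "\<lambda>i. num_compositions D j (k - 1 - int i)" "Suc D"] by simp
  finally show ?case .
qed

lemma num_compositions_Suc_diff:
  "num_compositions D (Suc j) s + num_compositions D j (s - int D - 2)
     = num_compositions D (Suc j) (s - 1) + num_compositions D j (s - 1)"
proof -
  have "num_compositions D (Suc j) s
      = num_compositions D j (s - 1) + (\<Sum>i<D. num_compositions D j (s - 2 - int i))"
    unfolding num_compositions.simps(2)
    by (subst sum.lessThan_Suc_shift) (simp add: algebra_simps)
  moreover have "num_compositions D (Suc j) (s - 1)
      = (\<Sum>i<D. num_compositions D j (s - 2 - int i)) + num_compositions D j (s - int D - 2)"
    by (simp add: algebra_simps)
  ultimately show ?thesis by simp
qed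

lemma symmetric_unimodal_le:
  fixes f :: "int \<Rightarrow> 'a::order" and c :: int
  assumes symmetric: "\<And>x. f (c - x) = f x"
    and decreasing: "\<And>s. c \<le> 2 * s \<Longrightarrow> f (s + 1) \<le> f s"
    and closer: "\<bar>2 * x - c\<bar> \<le> \<bar>2 * y - c\<bar>"
  shows "f y \<le> f x"
proof -
  have antimono: "f b \<le> f a" if "c \<le> 2 * a" "a \<le> b" for a b
    using \<open>a \<le> b\<close>
  proof (induction b rule: int_ge_induct)
    case (step b)
    then show ?case using decreasing[of b] \<open>c \<le> 2 * a\<close> by (auto intro: order_trans)
  qed simp
  define x' where "x' = (if c \<le> 2 * x then x else c - x)"
  define y' where "y' = (if c \<le> 2 * y then y else c - y)"
  have "f y' \<le> f x'"
    by (rule antimono) (use closer in \<open>auto simp: x'_def y'_def abs_if\<close>)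
  moreover have "f x' = f x" "f y' = f y"
    using symmetric by (auto simp: x'_def y'_def)
  ultimately show ?thesis by simp
qed

lemma num_compositions_decreasing:
  "int j * (int D + 2) \<le> 2 * s \<Longrightarrow> num_compositions D j (s + 1) \<le> num_compositions D j s"
proof (induction j arbitrary: s)
  case 0
  then show ?case by simp
next
  case (Suc j)
  have "num_compositions D j s \<le> num_compositions D j (s - int D - 1)"
  proof (rule symmetric_unimodal_le[of "num_compositions D j" "int j * (int D + 2)"])
    show "\<bar>2 * (s - int D - 1) - int j * (int D + 2)\<bar> \<le> \<bar>2 * s - int j * (int D + 2)\<bar>"
      using Suc.prems by (simp add: algebra_simps abs_if)
  qed (use Suc.IH num_compositions_symmetric in auto)
  then show ?case
    using num_compositions_Suc_diff[of D j "s + 1"] by (simp del: num_compositions.simps)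
qed

lemma num_compositions_le_closer_to_center:
  "\<bar>2 * x - int j * (int D + 2)\<bar> \<le> \<bar>2 * y - int j * (int D + 2)\<bar>
     \<Longrightarrow> num_compositions D j y \<le> num_compositions D j x"
  by (rule symmetric_unimodal_le) (auto intro: num_compositions_symmetric num_compositions_decreasing)

lemma two_mult_choose_two: "2 * int ((d + 2) choose 2) = (int d + 2) * (int d + 1)"
proof -
  have "2 * ((d + 2) choose 2) = (d + 2) * (d + 1)"
    by (simp add: choose_two)
  then show ?thesis by (metis (mono_tags) of_nat_add of_nat_mult of_nat_numeral of_nat_1)
qed

lemma num_compositions_le_at_choose_two:
  assumes "j \<le> d"
  shows "num_compositions d j (int ((d + 2) choose 2)) \<le> num_compositions d j (int ((d + 2) choose 2) - 1)"
proof (rule num_compositions_le_closer_to_center)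
  have "int j * (int d + 2) \<le> int d * (int d + 2)"
    using assms by (intro mult_right_mono) auto
  then show "\<bar>2 * (int ((d + 2) choose 2) - 1) - int j * (int d + 2)\<bar>
      \<le> \<bar>2 * int ((d + 2) choose 2) - int j * (int d + 2)\<bar>"
    unfolding right_diff_distrib two_mult_choose_two by (simp add: algebra_simps)
qed

lemma num_compositions_balanced_at_choose_two:
  fixes d :: nat
  defines "T \<equiv> int ((d + 2) choose 2)"
  shows "num_compositions d (Suc d) T + num_compositions d d T
       = num_compositions d (Suc d) (T - 1) + num_compositions d d (T - 1)"
proof -
  have "int d * (int d + 2) - (T - int d - 2) = T"
    using two_mult_choose_two[of d] by (simp add: T_def algebra_simps)
  then have "num_compositions d d (T - int d - 2) = num_compositions d d T"
    by (metis num_compositions_symmetric)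
  then show ?thesis
    using num_compositions_Suc_diff[of d d T] by (simp del: num_compositions.simps)
qed

lemma sum_num_compositions_at_choose_two_le:
  fixes \<Delta> :: "'a set set" and d :: nat
  defines "T \<equiv> int ((d + 2) choose 2)"
  assumes "finite \<Delta>" and "\<And>F. F \<in> \<Delta> \<Longrightarrow> card F \<le> d + 1"
    and "card {F\<in>\<Delta>. card F = d + 1} \<le> card {F\<in>\<Delta>. card F = d}"
  shows "(\<Sum>F\<in>\<Delta>. num_compositions d (card F) T)
       \<le> (\<Sum>F\<in>\<Delta>. num_compositions d (card F) (T - 1))"
proof -
  define X where "X = int (num_compositions d d (T - 1)) - int (num_compositions d d T)"
  define h where "h F = (if card F = d + 1 then X else if card F = d then - X else 0)"
    for F :: "'a set"
  have "int (num_compositions d (card F) T) - int (num_compositions d (card F) (T - 1)) \<le> h F"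
    if "F \<in> \<Delta>" for F
  proof -
    have "card F \<le> d + 1" using assms(3) that .
    then consider "card F = d + 1" | "card F = d" | "card F < d" by linarith
    then show ?thesis
    proof cases
      case 1
      then show ?thesis
        using num_compositions_balanced_at_choose_two[of d]
        by (simp add: h_def X_def T_def del: num_compositions.simps)
    next
      case 2
      then show ?thesis by (simp add: h_def X_def)
    next
      case 3
      then show ?thesis
        using num_compositions_le_at_choose_two[of "card F" d] by (simp add: h_def T_def)
    qed
  qed
  then have "(\<Sum>F\<in>\<Delta>. int (num_compositions d (card F) T))
      - (\<Sum>F\<in>\<Delta>. int (num_compositions d (card F) (T - 1))) \<le> (\<Sum>F\<in>\<Delta>. h F)"
    unfolding sum_subtractf[symmetric] by (rule sum_mono)
  also have "(\<Sum>F\<in>\<Delta>. h F)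
      = (\<Sum>F\<in>{F\<in>\<Delta>. card F = d + 1}. X) + (\<Sum>F\<in>{F\<in>\<Delta>. card F = d}. - X)"
    unfolding sum.inter_filter[OF assms(2)] sum.distrib[symmetric]
    by (intro sum.cong) (auto simp: h_def)
  also have "\<dots> = (int (card {F\<in>\<Delta>. card F = d + 1}) - int (card {F\<in>\<Delta>. card F = d})) * X"
    by (simp add: algebra_simps)
  also have "\<dots> \<le> 0"
    using assms(4) num_compositions_le_at_choose_two[of d d]
    by (intro mult_nonpos_nonneg) (auto simp: X_def T_def)
  finally show ?thesis
    by (simp add: of_nat_sum[symmetric] del: of_nat_sum)
qed

definition bounded_exponents :: "nat \<Rightarrow> nat set \<Rightarrow> int \<Rightarrow> (nat \<Rightarrow>\<^sub>0 nat) set" where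
  "bounded_exponents D F k =
     {a. Poly_Mapping.keys a = F \<and> (\<forall>i\<in>F. Poly_Mapping.lookup a i \<le> D + 1)
         \<and> int (\<Sum>i\<in>F. Poly_Mapping.lookup a i) = k}"

lemma lookup_pos_if_bounded_exponents:
  "a \<in> bounded_exponents D F k \<Longrightarrow> i \<in> F \<Longrightarrow> 0 < Poly_Mapping.lookup a i"
  by (auto simp: bounded_exponents_def in_keys_iff)

lemma sum_lookup_update_outside:
  "v \<notin> F \<Longrightarrow>
    (\<Sum>i\<in>F. Poly_Mapping.lookup (Poly_Mapping.update v c a) i) = (\<Sum>i\<in>F. Poly_Mapping.lookup a i)"
  by (intro sum.cong) (auto simp: lookup_update)

lemma update_zero_in_bounded_exponents:
  assumes "finite F" "v \<notin> F" "b \<in> bounded_exponents D (insert v F) k"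
  shows "Poly_Mapping.update v 0 b \<in> bounded_exponents D F (k - int (Poly_Mapping.lookup b v))"
  using assms
  unfolding bounded_exponents_def mem_Collect_eq sum_lookup_update_outside[OF assms(2)]
  by (auto simp: keys_update lookup_update)

lemma update_in_bounded_exponents:
  assumes "finite F" "v \<notin> F" "a \<in> bounded_exponents D F k" "0 < c" "c \<le> D + 1"
  shows "Poly_Mapping.update v c a \<in> bounded_exponents D (insert v F) (k + int c)"
  using assms
  unfolding bounded_exponents_def mem_Collect_eq sum.insert[OF assms(1,2)]
    sum_lookup_update_outside[OF assms(2)]
  by (auto simp: keys_update lookup_update)

lemma bij_betw_bounded_exponents_insert:
  assumes "finite F" "v \<notin> F"
  shows "bij_betw (\<lambda>b. (Poly_Mapping.lookup b v - 1, Poly_Mapping.update v 0 b))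
           (bounded_exponents D (insert v F) k)
           (SIGMA i:{..<Suc D}. bounded_exponents D F (k - 1 - int i))"
proof (rule bij_betw_byWitness[where f' = "\<lambda>(i, a). Poly_Mapping.update v (Suc i) a"])
  have pos: "0 < Poly_Mapping.lookup b v" if "b \<in> bounded_exponents D (insert v F) k" for b
    using lookup_pos_if_bounded_exponents[OF that] by simp
  then show "\<forall>b\<in>bounded_exponents D (insert v F) k.
      (\<lambda>(i, a). Poly_Mapping.update v (Suc i) a) (Poly_Mapping.lookup b v - 1, Poly_Mapping.update v 0 b) = b"
    by (auto simp: lookup_update intro!: poly_mapping_eqI)
  show "\<forall>p\<in>SIGMA i:{..<Suc D}. bounded_exponents D F (k - 1 - int i).
      (\<lambda>b. (Poly_Mapping.lookup b v - 1, Poly_Mapping.update v 0 b))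
        ((\<lambda>(i, a). Poly_Mapping.update v (Suc i) a) p) = p"
    using assms(2) by (auto simp: bounded_exponents_def in_keys_iff lookup_update intro!: poly_mapping_eqI)
  have "Poly_Mapping.lookup b v - 1 < Suc D \<and>
      Poly_Mapping.update v 0 b \<in> bounded_exponents D F (k - 1 - int (Poly_Mapping.lookup b v - 1))"
    if "b \<in> bounded_exponents D (insert v F) k" for b
  proof -
    have "Poly_Mapping.lookup b v \<le> D + 1"
      using that by (simp add: bounded_exponents_def)
    moreover have "k - 1 - int (Poly_Mapping.lookup b v - 1) = k - int (Poly_Mapping.lookup b v)"
      using pos[OF that] by (simp add: of_nat_diff)
    ultimately show ?thesis
      using update_zero_in_bounded_exponents[OF assms that] by auto
  qed
  then show "(\<lambda>b. (Poly_Mapping.lookup b v - 1, Poly_Mapping.update v 0 b)) ` bounded_exponents D (insert v F) k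
      \<subseteq> (SIGMA i:{..<Suc D}. bounded_exponents D F (k - 1 - int i))"
    by blast
  have "Poly_Mapping.update v (Suc i) a \<in> bounded_exponents D (insert v F) k"
    if "i < Suc D" "a \<in> bounded_exponents D F (k - 1 - int i)" for i a
    using update_in_bounded_exponents[OF assms that(2), of "Suc i"] that(1) by simp
  then show "(\<lambda>(i, a). Poly_Mapping.update v (Suc i) a) ` (SIGMA i:{..<Suc D}. bounded_exponents D F (k - 1 - int i))
      \<subseteq> bounded_exponents D (insert v F) k"
    by auto
qed

lemma card_bounded_exponents:
  "finite F \<Longrightarrow>
    finite (bounded_exponents D F k) \<and> card (bounded_exponents D F k) = num_compositions D (card F) k"
proof (induction F arbitrary: k rule: finite_induct)
  case empty
  have "bounded_exponents D {} k = (if k = 0 then {0} else {})"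
    by (auto simp: bounded_exponents_def)
  then show ?case by simp
next
  case (insert v F)
  have "card (bounded_exponents D (insert v F) k)
      = card (SIGMA i:{..<Suc D}. bounded_exponents D F (k - 1 - int i))"
    using bij_betw_bounded_exponents_insert[OF insert.hyps] by (rule bij_betw_same_card)
  also have "\<dots> = (\<Sum>i<Suc D. num_compositions D (card F) (k - 1 - int i))"
    using insert.IH by (simp add: card_SigmaI)
  finally show ?case
    using bij_betw_finite[OF bij_betw_bounded_exponents_insert[OF insert.hyps]] insert
    by (simp add: finite_SigmaI)
qed

lemma lookup_const_mult: "Poly_Mapping.lookup (const c * p) m = c * Poly_Mapping.lookup p m"
  by (simp add: const_def mult_map_scale_conv_mult[symmetric] Poly_Mapping.map.rep_eq when_def)

lemma keys_const_mult_subset: "Poly_Mapping.keys (const c * p) \<subseteq> Poly_Mapping.keys p"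
  by (auto simp: in_keys_iff lookup_const_mult)

interpretation mpoly: vector_space "\<lambda>(c::'k::field) (p::'k mpoly). const c * p"
  unfolding vector_space_def const_def
  by (simp add: distrib_left distrib_right single_add mult_single mult.assoc[symmetric])

lemma prod_var:
  "finite F \<Longrightarrow> (\<Prod>i\<in>F. var i) = Poly_Mapping.single (\<Sum>i\<in>F. Poly_Mapping.single i 1) (1::'k::field)"
  by (induction F rule: finite_induct) (simp_all add: var_def mult_single)

lemma var_power: "(var i :: 'k::field mpoly) ^ k = Poly_Mapping.single (Poly_Mapping.single i k) 1"
  by (induction k) (simp_all add: var_def mult_single single_add[symmetric])

lemma in_R_add: "in_R n p \<Longrightarrow> in_R n q \<Longrightarrow> in_R n (p + q)"
  unfolding in_R_def using keys_add[of p q] by (meson UnE subsetD)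

lemma in_R_single: "Poly_Mapping.keys m \<subseteq> {1..n} \<Longrightarrow> in_R n (Poly_Mapping.single m c)"
  by (simp add: in_R_def)

lemma in_R_zero: "in_R n 0"
  by (simp add: in_R_def)

lemma ideal_gen_zero: "0 \<in> ideal_gen n G"
  unfolding ideal_gen_def by (intro CollectI exI[of _ "{}"]) simp

lemma ideal_gen_add:
  assumes "p \<in> ideal_gen n G" "p' \<in> ideal_gen n G"
  shows "p + p' \<in> ideal_gen n G"
proof -
  obtain S q where S: "finite S" "S \<subseteq> G" "\<forall>g\<in>S. in_R n (q g)"
    and p: "p = (\<Sum>g\<in>S. q g * g)"
    using assms(1) unfolding ideal_gen_def by blast
  obtain S' q' where S': "finite S'" "S' \<subseteq> G" "\<forall>g\<in>S'. in_R n (q' g)"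
    and p': "p' = (\<Sum>g\<in>S'. q' g * g)"
    using assms(2) unfolding ideal_gen_def by blast
  define r where "r g = (if g \<in> S then q g else 0) + (if g \<in> S' then q' g else 0)" for g
  have "p + p' = (\<Sum>g\<in>S \<union> S'. r g * g)"
  proof -
    have "p = (\<Sum>g\<in>S \<union> S'. if g \<in> S then q g * g else 0)"
      "p' = (\<Sum>g\<in>S \<union> S'. if g \<in> S' then q' g * g else 0)"
      unfolding p p' sum.inter_restrict[OF finite_UnI[OF S(1) S'(1)], symmetric]
      by (simp_all add: Int_absorb1)
    then show ?thesis
      by (simp add: r_def distrib_right sum.distrib if_distrib[of "\<lambda>x. x * _"] cong: if_cong)
  qed
  moreover have "\<forall>g\<in>S \<union> S'. in_R n (r g)"
    using S(3) S'(3) by (simp add: r_def in_R_add in_R_zero)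
  ultimately show ?thesis
    unfolding ideal_gen_def using S(1,2) S'(1,2) by (intro CollectI exI[of _ "S \<union> S'"] exI[of _ r]) simp
qed

lemma ideal_gen_sum:
  "finite A \<Longrightarrow> (\<And>x. x \<in> A \<Longrightarrow> f x \<in> ideal_gen n G) \<Longrightarrow> sum f A \<in> ideal_gen n G"
  by (induction A rule: finite_induct) (auto intro: ideal_gen_zero ideal_gen_add)

lemma ideal_gen_mult_generator: "g \<in> G \<Longrightarrow> in_R n q \<Longrightarrow> q * g \<in> ideal_gen n G"
  unfolding ideal_gen_def by (intro CollectI exI[of _ "{g}"] exI[of _ "\<lambda>_. q"]) simp

lemma single_in_ideal_gen_if_divisible:
  assumes "Poly_Mapping.single e 1 \<in> G" "Poly_Mapping.keys m \<subseteq> {1..n}"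
    and "\<And>i. Poly_Mapping.lookup e i \<le> Poly_Mapping.lookup m i"
  shows "Poly_Mapping.single m (c::'k::field) \<in> ideal_gen n G"
proof -
  have "Poly_Mapping.keys (m - e) \<subseteq> {1..n}"
    using assms(2) by (auto simp: in_keys_iff lookup_minus)
  then have "Poly_Mapping.single (m - e) c * Poly_Mapping.single e 1 \<in> ideal_gen n G"
    by (intro ideal_gen_mult_generator[OF assms(1)] in_R_single)
  moreover have "m - e + e = m"
    using assms(3) by (intro poly_mapping_eqI) (simp add: lookup_add lookup_minus)
  ultimately show ?thesis
    by (simp add: mult_single)
qed

lemma lookup_le_if_in_keys_mult_single:
  fixes e :: "nat \<Rightarrow>\<^sub>0 nat"
  assumes "m \<in> Poly_Mapping.keys (q * Poly_Mapping.single e (c::'k::field))"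
  shows "Poly_Mapping.lookup e i \<le> Poly_Mapping.lookup m i"
proof -
  obtain a b where "m = a + b" "b \<in> Poly_Mapping.keys (Poly_Mapping.single e c)"
    using keys_mult assms by blast
  then show ?thesis
    by (cases "c = 0") (auto simp: lookup_add)
qed

definition J_generators :: "nat \<Rightarrow> nat set set \<Rightarrow> nat \<Rightarrow> 'k::field mpoly set" where
  "J_generators n \<Delta> d =
     {(\<Prod>i\<in>F. var i) | F. F \<subseteq> {1..n} \<and> F \<notin> \<Delta>} \<union> {var i ^ (d + 2) | i. i \<in> {1..n}}"

lemma J_ideal_eq_ideal_gen: "J_ideal n \<Delta> d = ideal_gen n (J_generators n \<Delta> d)"
  by (simp add: J_ideal_def J_generators_def)

definition standard_monomial :: "nat set set \<Rightarrow> nat \<Rightarrow> (nat \<Rightarrow>\<^sub>0 nat) \<Rightarrow> bool" where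
  "standard_monomial \<Delta> d m \<longleftrightarrow>
     Poly_Mapping.keys m \<in> \<Delta> \<and> (\<forall>i. Poly_Mapping.lookup m i \<le> d + 1)"

lemma single_in_J_ideal_if_not_standard:
  assumes "Poly_Mapping.keys m \<subseteq> {1..n}" "\<not> standard_monomial \<Delta> d m"
  shows "Poly_Mapping.single m (c::'k::field) \<in> J_ideal n \<Delta> d"
proof -
  consider (nonface) "Poly_Mapping.keys m \<notin> \<Delta>" | (high_power) i where "d + 1 < Poly_Mapping.lookup m i"
    using assms(2) unfolding standard_monomial_def by (meson not_le)
  then show ?thesis
  proof cases
    case nonface
    let ?e = "\<Sum>i\<in>Poly_Mapping.keys m. Poly_Mapping.single i 1"
    have "(\<Prod>i\<in>Poly_Mapping.keys m. var i) = Poly_Mapping.single ?e (1::'k)"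
      by (simp add: prod_var)
    moreover have "Poly_Mapping.lookup ?e i \<le> Poly_Mapping.lookup m i" for i
      by (simp add: lookup_sum lookup_single when_def in_keys_iff)
    ultimately show ?thesis
      unfolding J_ideal_eq_ideal_gen using nonface assms(1)
      by (intro single_in_ideal_gen_if_divisible[of ?e]) (auto simp: J_generators_def)
  next
    case high_power
    then have "i \<in> Poly_Mapping.keys m"
      by (simp add: in_keys_iff)
    then have "i \<in> {1..n}"
      using assms(1) by blast
    moreover have "Poly_Mapping.lookup (Poly_Mapping.single i (d + 2)) j \<le> Poly_Mapping.lookup m j" for j
      using high_power by (auto simp: lookup_single when_def)
    ultimately show ?thesis
      unfolding J_ideal_eq_ideal_gen using assms(1)
      by (intro single_in_ideal_gen_if_divisible[of "Poly_Mapping.single i (d + 2)"])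
        (auto simp: J_generators_def var_power[symmetric])
  qed
qed

lemma J_ideal_if_keys_not_standard:
  assumes "in_R n p" "\<forall>m\<in>Poly_Mapping.keys p. \<not> standard_monomial \<Delta> d m"
  shows "p \<in> J_ideal n \<Delta> d"
proof -
  have "p = (\<Sum>m\<in>Poly_Mapping.keys p. Poly_Mapping.single m (Poly_Mapping.lookup p m))"
    by (rule poly_mapping_eqI) (simp add: lookup_sum lookup_single when_def in_keys_iff)
  also have "\<dots> \<in> J_ideal n \<Delta> d"
    unfolding J_ideal_eq_ideal_gen
  proof (rule ideal_gen_sum)
    fix m assume "m \<in> Poly_Mapping.keys p"
    then show "Poly_Mapping.single m (Poly_Mapping.lookup p m) \<in> ideal_gen n (J_generators n \<Delta> d)"
      using assms single_in_J_ideal_if_not_standard[of m n \<Delta> d]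
      unfolding J_ideal_eq_ideal_gen in_R_def by blast
  qed simp
  finally show ?thesis .
qed

lemma keys_J_ideal_not_standard:
  assumes "simplicial_complex n \<Delta>" "p \<in> J_ideal n \<Delta> d" "m \<in> Poly_Mapping.keys p"
  shows "\<not> standard_monomial \<Delta> d m"
proof
  assume standard: "standard_monomial \<Delta> d m"
  obtain S q where S: "S \<subseteq> J_generators n \<Delta> d" and p: "p = (\<Sum>g\<in>S. q g * g)"
    using assms(2) unfolding J_ideal_eq_ideal_gen ideal_gen_def by blast
  obtain g where "g \<in> S" and m: "m \<in> Poly_Mapping.keys (q g * g)"
    using assms(3) keys_sum[of "\<lambda>g. q g * g" S] unfolding p by blast
  then consider (nonface) F where "F \<subseteq> {1..n}" "F \<notin> \<Delta>" "g = (\<Prod>i\<in>F. var i)"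
    | (high_power) i where "g = var i ^ (d + 2)"
    using S unfolding J_generators_def by blast
  then show False
  proof cases
    case nonface
    have "finite F"
      using nonface(1) finite_subset by blast
    have "1 \<le> Poly_Mapping.lookup m i" if "i \<in> F" for i
      using lookup_le_if_in_keys_mult_single[of m "q g" "\<Sum>i\<in>F. Poly_Mapping.single i 1" 1 i]
        m that \<open>finite F\<close>
      by (simp add: nonface(3) prod_var[OF \<open>finite F\<close>] lookup_sum lookup_single when_def)
    then have "F \<subseteq> Poly_Mapping.keys m"
      by (auto simp: in_keys_iff Suc_le_eq)
    then have "F \<in> \<Delta>"
      using standard assms(1) unfolding standard_monomial_def simplicial_complex_def by blast
    then show False
      using nonface(2) by blast
  next
    case high_power
    then have "g = Poly_Mapping.single (Poly_Mapping.single i (d + 2)) 1"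
      by (simp only: var_power)
    then have "d + 2 \<le> Poly_Mapping.lookup m i"
      using lookup_le_if_in_keys_mult_single[of m "q g" "Poly_Mapping.single i (d + 2)" 1 i] m
      by simp
    moreover have "Poly_Mapping.lookup m i \<le> d + 1"
      using standard unfolding standard_monomial_def by blast
    ultimately show False
      by linarith
  qed
qed

lemma finite_simplicial_complex: "simplicial_complex n \<Delta> \<Longrightarrow> finite \<Delta>"
  unfolding simplicial_complex_def by (metis Pow_iff finite_Pow_iff finite_atLeastAtMost finite_subset subsetI)

lemma finite_face: "simplicial_complex n \<Delta> \<Longrightarrow> F \<in> \<Delta> \<Longrightarrow> finite F"
  unfolding simplicial_complex_def by (meson finite_atLeastAtMost finite_subset)

definition standard_monomials :: "nat set set \<Rightarrow> nat \<Rightarrow> nat \<Rightarrow> (nat \<Rightarrow>\<^sub>0 nat) set" where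
  "standard_monomials \<Delta> d k = {m. standard_monomial \<Delta> d m \<and> mono_deg m = k}"

lemma standard_monomials_eq_UN_bounded_exponents:
  "standard_monomials \<Delta> d k = (\<Union>F\<in>\<Delta>. bounded_exponents d F (int k))"
proof -
  have "(\<forall>i. Poly_Mapping.lookup m i \<le> d + 1)
      \<longleftrightarrow> (\<forall>i\<in>Poly_Mapping.keys m. Poly_Mapping.lookup m i \<le> d + 1)"
    for m :: "nat \<Rightarrow>\<^sub>0 nat"
    by (metis in_keys_iff zero_le)
  then show ?thesis
    unfolding standard_monomials_def bounded_exponents_def standard_monomial_def mono_deg_def
    by (auto simp del: of_nat_sum)
qed

lemma card_standard_monomials:
  assumes "simplicial_complex n \<Delta>"
  shows "finite (standard_monomials \<Delta> d k)"
    and "card (standard_monomials \<Delta> d k) = (\<Sum>F\<in>\<Delta>. num_compositions d (card F) (int k))"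
proof -
  have finite: "finite (bounded_exponents d F (int k))"
    and card: "card (bounded_exponents d F (int k)) = num_compositions d (card F) (int k)"
    if "F \<in> \<Delta>" for F
    using card_bounded_exponents finite_face[OF assms that] by blast+
  show "finite (standard_monomials \<Delta> d k)"
    unfolding standard_monomials_eq_UN_bounded_exponents
    using finite finite_simplicial_complex[OF assms] by blast
  have "card (\<Union>F\<in>\<Delta>. bounded_exponents d F (int k))
      = (\<Sum>F\<in>\<Delta>. card (bounded_exponents d F (int k)))"
    using finite_simplicial_complex[OF assms] finite
    by (intro card_UN_disjoint) (auto simp: bounded_exponents_def)
  then show "card (standard_monomials \<Delta> d k) = (\<Sum>F\<in>\<Delta>. num_compositions d (card F) (int k))"
    unfolding standard_monomials_eq_UN_bounded_exponents by (simp add: card)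
qed

definition restrict_monomials :: "(nat \<Rightarrow>\<^sub>0 nat) set \<Rightarrow> 'k::field mpoly \<Rightarrow> 'k mpoly" where
  "restrict_monomials B p = Abs_poly_mapping (\<lambda>m. Poly_Mapping.lookup p m when m \<in> B)"

lemma lookup_restrict_monomials:
  "Poly_Mapping.lookup (restrict_monomials B p) m = (Poly_Mapping.lookup p m when m \<in> B)"
proof -
  have "finite {m. (Poly_Mapping.lookup p m when m \<in> B) \<noteq> 0}"
    by (rule finite_subset[OF _ finite_keys[of p]]) (auto simp: in_keys_iff)
  then show ?thesis
    by (simp add: restrict_monomials_def)
qed

lemma subspace_homog_piece: "mpoly.subspace (homog_piece n k)"
  unfolding mpoly.subspace_def homog_piece_def in_R_def
  by (auto dest!: subsetD[OF keys_add] subsetD[OF keys_const_mult_subset])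

lemma J_ideal_if_restrict_standard_eq_0:
  assumes "p \<in> homog_piece n k" "restrict_monomials (standard_monomials \<Delta> d k) p = 0"
  shows "p \<in> J_ideal n \<Delta> d"
proof (rule J_ideal_if_keys_not_standard)
  show "in_R n p"
    using assms(1) by (simp add: homog_piece_def)
  show "\<forall>m\<in>Poly_Mapping.keys p. \<not> standard_monomial \<Delta> d m"
  proof
    fix m assume m: "m \<in> Poly_Mapping.keys p"
    have "Poly_Mapping.lookup (restrict_monomials (standard_monomials \<Delta> d k) p) m = 0"
      using assms(2) by simp
    then have "m \<notin> standard_monomials \<Delta> d k"
      using m by (auto simp: lookup_restrict_monomials in_keys_iff when_def split: if_splits)
    moreover have "mono_deg m = k"
      using assms(1) m by (simp add: homog_piece_def)
    ultimately show "\<not> standard_monomial \<Delta> d m"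
      by (simp add: standard_monomials_def)
  qed
qed

lemma card_le_card_if_lin_indep_supported:
  fixes S :: "'k::field mpoly set"
  assumes "lin_indep_mod {0} S" "finite B" "\<And>s. s \<in> S \<Longrightarrow> Poly_Mapping.keys s \<subseteq> B"
  shows "card S \<le> card B"
proof (cases "finite S")
  case True
  have "\<not> mpoly.dependent S"
    using assms(1) unfolding mpoly.dependent_finite[OF True] lin_indep_mod_def by auto
  moreover have "S \<subseteq> mpoly.span ((\<lambda>m. Poly_Mapping.single m 1) ` B)"
  proof
    fix s assume "s \<in> S"
    have "s = (\<Sum>m\<in>B. const (Poly_Mapping.lookup s m) * Poly_Mapping.single m 1)"
      using assms(2) assms(3)[OF \<open>s \<in> S\<close>]
      by (intro poly_mapping_eqI)
        (auto simp: lookup_sum lookup_const_mult lookup_single when_def of_bool_def[symmetric] Int_insert_right in_keys_iff)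
    also have "\<dots> \<in> mpoly.span ((\<lambda>m. Poly_Mapping.single m 1) ` B)"
      by (intro mpoly.span_sum mpoly.span_scale mpoly.span_base) auto
    finally show "s \<in> mpoly.span ((\<lambda>m. Poly_Mapping.single m 1) ` B)" .
  qed
  ultimately have "card S \<le> card ((\<lambda>m. Poly_Mapping.single m (1::'k)) ` B)"
    using mpoly.independent_span_bound assms(2) by blast
  also have "\<dots> \<le> card B"
    by (rule card_image_le[OF assms(2)])
  finally show ?thesis .
qed simp

lemma card_le_card_standard_monomials:
  assumes "simplicial_complex n \<Delta>" "S \<subseteq> homog_piece n k"
    and "lin_indep_mod (J_ideal n \<Delta> d) (S :: 'k::field mpoly set)"
  shows "card S \<le> card (standard_monomials \<Delta> d k)"
proof (cases "finite S")
  case True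
  let ?r = "restrict_monomials (standard_monomials \<Delta> d k) :: 'k mpoly \<Rightarrow> 'k mpoly"
  have coeffs_zero: "\<forall>s\<in>S. c s = 0" if "(\<Sum>s\<in>S. const (c s) * ?r s) = 0" for c
  proof -
    have "(\<Sum>s\<in>S. const (c s) * s) \<in> homog_piece n k"
      using assms(2) subspace_homog_piece
      by (intro mpoly.subspace_sum mpoly.subspace_scale) auto
    moreover have "?r (\<Sum>s\<in>S. const (c s) * s) = (\<Sum>s\<in>S. const (c s) * ?r s)"
      by (intro poly_mapping_eqI)
        (simp add: lookup_restrict_monomials lookup_sum lookup_const_mult when_def sum_distrib_left)
    ultimately have "(\<Sum>s\<in>S. const (c s) * s) \<in> J_ideal n \<Delta> d"
      using that by (intro J_ideal_if_restrict_standard_eq_0) auto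
    then show ?thesis
      using assms(3) by (simp add: lin_indep_mod_def)
  qed
  have inj: "inj_on ?r S"
  proof (rule inj_onI, rule ccontr)
    fix s1 s2 assume s: "s1 \<in> S" "s2 \<in> S" "?r s1 = ?r s2" "s1 \<noteq> s2"
    define c where "c s = (if s = s1 then 1 else if s = s2 then -1 else (0::'k))" for s
    have "(\<Sum>s\<in>S. const (c s) * ?r s) = (\<Sum>s\<in>{s1, s2}. const (c s) * ?r s)"
      using True s by (intro sum.mono_neutral_right) (auto simp: c_def const_def)
    also have "\<dots> = 0"
      using s by (simp add: c_def const_def single_uminus)
    finally have "c s1 = 0"
      using coeffs_zero s(1) by blast
    then show False
      by (simp add: c_def)
  qed
  have "card (?r ` S) \<le> card (standard_monomials \<Delta> d k)"
  proof (rule card_le_card_if_lin_indep_supported)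
    show "lin_indep_mod {0} (?r ` S)"
      unfolding lin_indep_mod_def
    proof (intro allI impI ballI)
      fix c :: "'k mpoly \<Rightarrow> 'k" and v
      assume "(\<Sum>w\<in>?r ` S. const (c w) * w) \<in> {0}" and v: "v \<in> ?r ` S"
      then have "(\<Sum>s\<in>S. const (c (?r s)) * ?r s) = 0"
        by (simp add: sum.reindex[OF inj])
      then show "c v = 0"
        using coeffs_zero[of "\<lambda>s. c (?r s)"] v by auto
    qed
    show "finite (standard_monomials \<Delta> d k)"
      using card_standard_monomials(1)[OF assms(1)] .
    show "Poly_Mapping.keys s \<subseteq> standard_monomials \<Delta> d k" if "s \<in> ?r ` S" for s
      using that by (auto simp: in_keys_iff lookup_restrict_monomials)
  qed
  then show ?thesis
    using card_image[OF inj] by simp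
qed simp

lemma inj_single_one: "inj (\<lambda>m. Poly_Mapping.single m (1::'b::zero_neq_one))"
  by (rule injI) (metis lookup_single_eq lookup_single_not_eq zero_neq_one)

lemma standard_monomials_in_homog_piece:
  assumes "simplicial_complex n \<Delta>"
  shows "(\<lambda>m. Poly_Mapping.single m 1) ` standard_monomials \<Delta> d k \<subseteq> homog_piece n k"
  using assms unfolding simplicial_complex_def
  by (auto simp: homog_piece_def in_R_def standard_monomials_def standard_monomial_def)

lemma lin_indep_mod_J_ideal_standard_monomials:
  assumes "simplicial_complex n \<Delta>"
  shows "lin_indep_mod (J_ideal n \<Delta> d)
           ((\<lambda>m. Poly_Mapping.single m (1::'k::field)) ` standard_monomials \<Delta> d k)"
  unfolding lin_indep_mod_def
proof (intro allI impI ballI)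
  fix c :: "'k mpoly \<Rightarrow> 'k" and s :: "'k mpoly"
  let ?B = "standard_monomials \<Delta> d k"
  assume J: "(\<Sum>s\<in>(\<lambda>m. Poly_Mapping.single m 1) ` ?B. const (c s) * s) \<in> J_ideal n \<Delta> d"
    and "s \<in> (\<lambda>m. Poly_Mapping.single m 1) ` ?B"
  then obtain m where m: "m \<in> ?B" and s: "s = Poly_Mapping.single m 1"
    by blast
  define p where "p = (\<Sum>s\<in>(\<lambda>m. Poly_Mapping.single m (1::'k)) ` ?B. const (c s) * s)"
  have "p = (\<Sum>m\<in>?B. const (c (Poly_Mapping.single m 1)) * Poly_Mapping.single m 1)"
    unfolding p_def by (simp add: sum.reindex[OF inj_on_subset[OF inj_single_one]])
  then have "Poly_Mapping.lookup p m = c s"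
    using card_standard_monomials(1)[OF assms] m s
    by (simp add: lookup_sum lookup_const_mult lookup_single when_def of_bool_def[symmetric])
  moreover have "m \<notin> Poly_Mapping.keys p"
    using keys_J_ideal_not_standard[OF assms] J m by (auto simp: p_def standard_monomials_def)
  ultimately show "c s = 0"
    by (simp add: in_keys_iff)
qed

lemma quot_dim_J_ideal:
  assumes "simplicial_complex n \<Delta>"
  shows "quot_dim n (J_ideal n \<Delta> d :: 'k::field mpoly set) k
       = (\<Sum>F\<in>\<Delta>. num_compositions d (card F) (int k))"
proof -
  let ?B = "standard_monomials \<Delta> d k"
  let ?dims = "{card S |S. finite S \<and> S \<subseteq> homog_piece n k
                            \<and> lin_indep_mod (J_ideal n \<Delta> d :: 'k mpoly set) S}"
  have "Max ?dims = card ?B"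
  proof (rule Max_eqI)
    have "?dims \<subseteq> {..card ?B}"
      using card_le_card_standard_monomials[OF assms] by auto
    then show "finite ?dims"
      by (rule finite_subset) simp
    show "y \<le> card ?B" if "y \<in> ?dims" for y
      using that card_le_card_standard_monomials[OF assms] by auto
    let ?S = "(\<lambda>m. Poly_Mapping.single m (1::'k)) ` ?B"
    have "card ?S = card ?B"
      by (rule card_image[OF inj_on_subset[OF inj_single_one]]) simp
    moreover have "finite ?S"
      using card_standard_monomials(1)[OF assms] by simp
    ultimately show "card ?B \<in> ?dims"
      using standard_monomials_in_homog_piece[OF assms] lin_indep_mod_J_ideal_standard_monomials[OF assms]
      unfolding mem_Collect_eq by metis
  qed
  then show ?thesis
    unfolding quot_dim_def using card_standard_monomials(2)[OF assms] by simp
qed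

lemma sum_card_filter_swap:
  assumes "finite A" "finite B"
  shows "(\<Sum>a\<in>A. card {b\<in>B. R a b}) = (\<Sum>b\<in>B. card {a\<in>A. R a b})"
proof -
  have "(\<Sum>a\<in>A. card {b\<in>B. R a b}) = (\<Sum>a\<in>A. \<Sum>b\<in>B. of_bool (R a b))"
    using assms(2) by (simp add: Int_def conj_commute)
  also have "\<dots> = (\<Sum>b\<in>B. \<Sum>a\<in>A. of_bool (R a b))"
    by (rule sum.swap)
  also have "\<dots> = (\<Sum>b\<in>B. card {a\<in>A. R a b})"
    using assms(1) by (simp add: Int_def conj_commute)
  finally show ?thesis .
qed

lemma fvec_le_if_without_boundary:
  assumes "simplicial_complex n \<Delta>" "d > 0" "without_boundary \<Delta> d"
  shows "fvec \<Delta> d \<le> fvec \<Delta> (d - 1)"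
proof -
  define ridges where "ridges = {G\<in>\<Delta>. card G = d}"
  define facets where "facets = {F\<in>\<Delta>. card F = d + 1}"
  have "(\<Sum>G\<in>ridges. card {F\<in>facets. G \<subseteq> F})
      = (\<Sum>F\<in>facets. card {G\<in>ridges. G \<subseteq> F})"
    using finite_simplicial_complex[OF assms(1)]
    by (intro sum_card_filter_swap) (auto simp: ridges_def facets_def)
  moreover have "card {F\<in>facets. G \<subseteq> F} = 2" if "G \<in> ridges" for G
  proof -
    have "{F\<in>facets. G \<subseteq> F} = {F\<in>\<Delta>. card F = d + 1 \<and> G \<subseteq> F}"
      by (auto simp: facets_def)
    then show ?thesis
      using assms(3) that by (simp add: without_boundary_def ridges_def)
  qed
  moreover have "card {G\<in>ridges. G \<subseteq> F} = d + 1" if "F \<in> facets" for F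
  proof -
    have "{G\<in>ridges. G \<subseteq> F} = {G. G \<subseteq> F \<and> card G = d}"
      using that assms(1) unfolding ridges_def facets_def simplicial_complex_def by blast
    then show ?thesis
      using that n_subsets[OF finite_face[OF assms(1)], of F d] by (simp add: facets_def)
  qed
  ultimately have "2 * card ridges = (d + 1) * card facets"
    by (simp add: mult.commute)
  moreover have "2 * card facets \<le> (d + 1) * card facets"
    using assms(2) by (intro mult_right_mono) auto
  ultimately have "card facets \<le> card ridges"
    by linarith
  then show ?thesis
    using assms(2) by (simp add: fvec_def ridges_def facets_def)
qed

theorem theorem6p6:
  fixes n d :: nat and \<Delta> :: "nat set set"
  assumes "simplicial_complex n \<Delta>"
    and "cdim \<Delta> d"
    and "d > 0"
  defines "t \<equiv> (d + 2) choose 2"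
  shows "(fvec \<Delta> (d - 1) \<ge> fvec \<Delta> d \<longrightarrow>
            quot_dim n (J_ideal n \<Delta> d :: 'k::field mpoly set) (t - 1)
              \<ge> quot_dim n (J_ideal n \<Delta> d :: 'k mpoly set) t)
       \<and> (pseudomanifold \<Delta> d \<and> without_boundary \<Delta> d
            \<and> top_homology_nonzero TYPE('k) \<Delta> d \<longrightarrow>
            quot_dim n (J_ideal n \<Delta> d :: 'k mpoly set) (t - 1)
              \<ge> quot_dim n (J_ideal n \<Delta> d :: 'k mpoly set) t)"
proof -
  have "quot_dim n (J_ideal n \<Delta> d :: 'k mpoly set) t \<le> quot_dim n (J_ideal n \<Delta> d :: 'k mpoly set) (t - 1)"
    if "fvec \<Delta> d \<le> fvec \<Delta> (d - 1)"
  proof -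
    have "0 < t"
      by (simp add: t_def)
    then have "int (t - 1) = int t - 1"
      by (simp add: of_nat_diff)
    moreover have "card {F\<in>\<Delta>. card F = d + 1} \<le> card {F\<in>\<Delta>. card F = d}"
      using that assms(3) by (simp add: fvec_def)
    ultimately show ?thesis
      using sum_num_compositions_at_choose_two_le[OF finite_simplicial_complex[OF assms(1)]] assms(2)
      unfolding quot_dim_J_ideal[OF assms(1)] t_def cdim_def by auto
  qed
  \<comment> \<open>of the second hypothesis only the absence of boundary is used\<close>
  then show ?thesis
    using fvec_le_if_without_boundary[OF assms(1,3)] by blast
qed

end
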